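(* For any $x\in\mathrm{St}(d,r)^\epsilon$ and $x'=\mathrm{Proj}_{\mathrm{St}}(x)$, we have $\langle\nabla\mathcal{L}(x'),x-x'\rangle=0$.
   Context: $\langle A,B\rangle=\mathrm{Tr}(AB^\top)$; $\mathrm{sym}(A)=\frac12(A+A^\top)$; $\|\cdot\|_F$ Frobenius norm. $\mathrm{St}(d,r)=\{x\in\mathbb{R}^{d\times r}:x^\top x=I_r\}$; for $\epsilon\in(0,3/4)$, $\mathrm{St}(d,r)^\epsilon=\{x:\|x^\top x-I_r\|_F\le\epsilon\}$. $\mathrm{Proj}_{\mathrm{St}}(x)$ is the Frobenius-norm projection of $x$ onto $\mathrm{St}(d,r)$ (for $x$ of full column rank with thin SVD $x=USV^\top$ it equals $UV^\top$). $f:\mathbb{R}^{d\times r}\to\mathbb{R}$ is $C^2$, $\gamma>0$, and the merit function is $\mathcal{L}(x)=f(x)-\frac12\langle\mathrm{sym}(x^\top\nabla f(x)),x^\top x-I_r\rangle+\frac\gamma4\|x^\top x-I_r\|_F^2$. *)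

theory Defs
  imports "HOL-Analysis.Analysis"
begin

text \<open>Matrices in R^{d x r} are represented as real^'r^'d (rows indexed by 'd,
columns by 'r). The Euclidean inner product on real^'r^'d is
sum_i sum_j A_ij B_ij = Tr(A B^T), and norm is the Frobenius norm.\<close>

definition grad :: "('a::real_inner \<Rightarrow> real) \<Rightarrow> 'a \<Rightarrow> 'a" where
  "grad f x = (THE g. (f has_derivative (\<lambda>h. g \<bullet> h)) (at x))"

definition C2 :: "('a::euclidean_space \<Rightarrow> real) \<Rightarrow> bool" where
  "C2 f \<longleftrightarrow> (\<exists>G H. (\<forall>x. (f has_derivative (\<lambda>h. G x \<bullet> h)) (at x)) \<and>
                  (\<forall>x. (G has_derivative blinfun_apply (H x)) (at x)) \<and>
                  continuous_on UNIV H)"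

definition msym :: "real^'r^'r \<Rightarrow> real^'r^'r" where
  "msym A = (1/2) *\<^sub>R (A + transpose A)"

definition Stiefel :: "(real^'r^'d) set" where
  "Stiefel = {x. transpose x ** x = mat 1}"

definition Stiefel_eps :: "real \<Rightarrow> (real^'r^'d) set" where
  "Stiefel_eps \<epsilon> = {x. norm (transpose x ** x - mat 1) \<le> \<epsilon>}"

definition merit :: "(real^'r^'d \<Rightarrow> real) \<Rightarrow> real \<Rightarrow> real^'r^'d \<Rightarrow> real" where
  "merit f \<gamma> x = f x - (1/2) * (msym (transpose x ** grad f x) \<bullet> (transpose x ** x - mat 1))
       + (\<gamma>/4) * (norm (transpose x ** x - mat 1))\<^sup>2"

end

theory Submission
  imports Defs
begin

text \<open>At a point x' of St(d,r) the constraint residual x'^T x' - I vanishes, so the gradient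
of the merit function there is the Riemannian gradient
\<nabla>f(x') - x' sym(x'^T \<nabla>f(x')), which is orthogonal to every x' P with P symmetric.
On the other hand, a nearest point x' of St(d,r) to x cannot be improved by rotating two of
its rows in their plane; the first-order condition for all such rotations says that
x x'^T is symmetric, which forces x - x' = x' P with P symmetric.\<close>

lemma linear_le_quadratic_imp_zero:
  fixes a b :: real
  assumes "\<And>t. t * b \<le> t\<^sup>2 * a"
  shows "b = 0"
proof (rule ccontr)
  assume "b \<noteq> 0"
  define k where "k = \<bar>a\<bar> + 1"
  have "k > 0" by (simp add: k_def add_nonneg_pos)
  have "(b / k) * b * k\<^sup>2 \<le> (b / k)\<^sup>2 * a * k\<^sup>2"
    by (rule mult_right_mono[OF assms]) simp
  then have "b\<^sup>2 * k \<le> b\<^sup>2 * a"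
    using \<open>k > 0\<close> by (simp add: power2_eq_square field_simps)
  moreover have "b\<^sup>2 * a < b\<^sup>2 * k"
    using \<open>b \<noteq> 0\<close> by (simp add: k_def)
  ultimately show False by simp
qed

lemma unit_circle_le_zero_imp_zero:
  fixes a b :: real
  assumes "\<And>c s. c\<^sup>2 + s\<^sup>2 = 1 \<Longrightarrow> (c - 1) * a + s * b \<le> 0"
  shows "b = 0"
proof (rule linear_le_quadratic_imp_zero)
  fix t :: real
  define q where "q = 1 + t\<^sup>2"
  have "q > 0" by (simp add: q_def add_pos_nonneg)
  have "((1 - t\<^sup>2) / q)\<^sup>2 + (2 * t / q)\<^sup>2 = 1"
    using \<open>q > 0\<close> by (simp add: q_def field_simps) algebra
  from assms[OF this] have "((1 - t\<^sup>2) / q - 1) * a + (2 * t / q) * b \<le> 0" .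
  also have "(1 - t\<^sup>2) / q - 1 = - 2 * t\<^sup>2 / q"
    using \<open>q > 0\<close> by (simp add: q_def field_simps)
  finally show "t * b \<le> t\<^sup>2 * a"
    using \<open>q > 0\<close> by (simp add: field_simps divide_le_cancel)
qed

lemma sum_UNIV_split_pair:
  fixes g :: "'a::finite \<Rightarrow> 'b::comm_monoid_add"
  assumes "i \<noteq> j"
  shows "sum g UNIV = g i + g j + sum g (UNIV - {i, j})"
  using assms by (simp add: sum.remove[of UNIV i] sum.remove[of "UNIV - {i}" j]
      Diff_insert2[symmetric] add.assoc)

lemma inner_matrix_eq_trace: "(A::real^'n^'m) \<bullet> B = trace (transpose A ** B)"
  unfolding inner_vec_def trace_def matrix_matrix_mult_def transpose_def
  by (simp add: sum.swap[of _ "UNIV :: 'm set"])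

lemma inner_matrix_mult_left: "((A::real^'n^'m) ** (B::real^'p^'n)) \<bullet> C = B \<bullet> (transpose A ** C)"
  unfolding inner_matrix_eq_trace matrix_transpose_mul matrix_mul_assoc ..

lemma inner_transpose: "transpose (A::real^'n^'m) \<bullet> transpose B = A \<bullet> B"
proof -
  have "transpose A \<bullet> transpose B = trace (A ** transpose B)"
    by (simp add: inner_matrix_eq_trace)
  also have "\<dots> = trace (transpose B ** A)" by (rule trace_mul_sym)
  also have "\<dots> = B \<bullet> A" by (simp add: inner_matrix_eq_trace)
  finally show ?thesis by (simp only: inner_commute)
qed

lemma inner_self_Stiefel: "z \<in> Stiefel \<Longrightarrow> z \<bullet> (z::real^'r^'d) = real CARD('r)"
  unfolding inner_matrix_eq_trace Stiefel_def by (simp add: trace_I)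

lemma bounded_bilinear_matrix_mult:
  "bounded_bilinear (\<lambda>(A::real^'n^'m) (B::real^'p^'n). A ** B)"
  unfolding bilinear_conv_bounded_bilinear[symmetric] bilinear_def
  by (auto intro!: linearI simp: vec_eq_iff matrix_matrix_mult_def sum.distrib
      algebra_simps sum_distrib_left)

lemma bounded_linear_transpose: "bounded_linear (transpose :: real^'n^'m \<Rightarrow> real^'m^'n)"
  unfolding linear_conv_bounded_linear[symmetric]
  by (auto intro!: linearI simp: vec_eq_iff transpose_def)

lemma bounded_linear_msym: "bounded_linear (msym :: real^'r^'r \<Rightarrow> _)"
  unfolding linear_conv_bounded_linear[symmetric]
  by (auto intro!: linearI simp: vec_eq_iff transpose_def msym_def algebra_simps)

lemma transpose_msym [simp]: "transpose (msym A) = msym A"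
  by (simp add: msym_def vec_eq_iff transpose_def)

lemma inner_msym_symmetric:
  assumes "transpose P = P"
  shows "msym A \<bullet> P = A \<bullet> P"
proof -
  have "transpose A \<bullet> P = A \<bullet> P" using inner_transpose[of A P] assms by simp
  then show ?thesis by (simp add: msym_def inner_add_left)
qed

definition rotate_rows :: "'d \<Rightarrow> 'd \<Rightarrow> real \<Rightarrow> real \<Rightarrow> 'a::real_vector^'d \<Rightarrow> 'a^'d" where
  "rotate_rows i j c s y =
     (\<chi> m. if m = i then c *\<^sub>R y$i - s *\<^sub>R y$j else if m = j then s *\<^sub>R y$i + c *\<^sub>R y$j else y$m)"

lemma Stiefel_rotate_rows:
  fixes y :: "real^'r^'d"
  assumes "y \<in> Stiefel" "i \<noteq> j" "c\<^sup>2 + s\<^sup>2 = 1"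
  shows "rotate_rows i j c s y \<in> Stiefel"
proof -
  let ?z = "rotate_rows i j c s y"
  have "(transpose ?z ** ?z)$a$b = (transpose y ** y)$a$b" for a b
  proof -
    have "?z$i$a * ?z$i$b + ?z$j$a * ?z$j$b = (c\<^sup>2 + s\<^sup>2) * (y$i$a * y$i$b + y$j$a * y$j$b)"
      using \<open>i \<noteq> j\<close> by (simp add: rotate_rows_def algebra_simps power2_eq_square)
    moreover have "(\<Sum>m\<in>UNIV - {i, j}. ?z$m$a * ?z$m$b) = (\<Sum>m\<in>UNIV - {i, j}. y$m$a * y$m$b)"
      by (rule sum.cong) (auto simp: rotate_rows_def)
    ultimately show ?thesis
      using assms(2,3) by (simp add: matrix_matrix_mult_def transpose_def
          sum_UNIV_split_pair[of i j])
  qed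
  then show ?thesis using assms(1) by (simp add: Stiefel_def vec_eq_iff)
qed

lemma inner_rotate_rows:
  fixes x y :: "'a::real_inner^'d"
  assumes "i \<noteq> j"
  shows "x \<bullet> rotate_rows i j c s y =
    x \<bullet> y + (c - 1) * (x$i \<bullet> y$i + x$j \<bullet> y$j) + s * (x$j \<bullet> y$i - x$i \<bullet> y$j)"
proof -
  have "(\<Sum>m\<in>UNIV - {i, j}. x$m \<bullet> rotate_rows i j c s y $ m) = (\<Sum>m\<in>UNIV - {i, j}. x$m \<bullet> y$m)"
    by (rule sum.cong) (auto simp: rotate_rows_def)
  then show ?thesis
    using assms by (simp add: inner_vec_def sum_UNIV_split_pair[of i j] rotate_rows_def
        inner_diff_right inner_add_right algebra_simps)
qed

lemma nearest_Stiefel_inner_le: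
  fixes x x' z :: "real^'r^'d"
  assumes "x' \<in> Stiefel" "\<forall>z\<in>Stiefel. norm (x - x') \<le> norm (x - z)" "z \<in> Stiefel"
  shows "x \<bullet> z \<le> x \<bullet> x'"
proof -
  have "(x - x') \<bullet> (x - x') \<le> (x - z) \<bullet> (x - z)"
    using assms(2,3) norm_le by blast
  then show ?thesis
    using inner_self_Stiefel[OF assms(1)] inner_self_Stiefel[OF assms(3)]
    by (simp add: inner_diff_left inner_diff_right inner_commute)
qed

lemma nearest_Stiefel_rows_inner_sym:
  fixes x x' :: "real^'r^'d"
  assumes "x' \<in> Stiefel" "\<forall>z\<in>Stiefel. norm (x - x') \<le> norm (x - z)"
  shows "x$i \<bullet> x'$j = x$j \<bullet> x'$i"
proof (cases "i = j")
  case False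
  have "x$j \<bullet> x'$i - x$i \<bullet> x'$j = 0"
  proof (rule unit_circle_le_zero_imp_zero)
    fix c s :: real
    assume "c\<^sup>2 + s\<^sup>2 = 1"
    with assms False have "x \<bullet> rotate_rows i j c s x' \<le> x \<bullet> x'"
      by (simp add: nearest_Stiefel_inner_le Stiefel_rotate_rows)
    then show "(c - 1) * (x$i \<bullet> x'$i + x$j \<bullet> x'$j) + s * (x$j \<bullet> x'$i - x$i \<bullet> x'$j) \<le> 0"
      by (simp add: inner_rotate_rows[OF False])
  qed
  then show ?thesis by simp
qed simp

lemma nearest_Stiefel_normal:
  fixes x x' :: "real^'r^'d"
  assumes "x' \<in> Stiefel" "\<forall>z\<in>Stiefel. norm (x - x') \<le> norm (x - z)"
  obtains P where "transpose P = P" "x - x' = x' ** P"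
proof -
  have I: "transpose x' ** x' = mat 1" using assms(1) by (simp add: Stiefel_def)
  define K where "K = x ** transpose x'"
  have "transpose K = K"
    using nearest_Stiefel_rows_inner_sym[OF assms]
    by (simp add: K_def vec_eq_iff transpose_def matrix_matrix_mult_def inner_vec_def)
  define N where "N = transpose x ** x'"
  have xN: "x = x' ** N"
  proof -
    have "x = x ** (transpose x' ** x')" by (simp add: I)
    also have "\<dots> = K ** x'" by (simp add: K_def matrix_mul_assoc)
    also have "\<dots> = transpose K ** x'" by (simp add: \<open>transpose K = K\<close>)
    also have "\<dots> = x' ** N" by (simp add: K_def N_def matrix_transpose_mul matrix_mul_assoc)
    finally show ?thesis .
  qed
  have "transpose N = N"
  proof -
    have "transpose N = transpose x' ** x" by (simp add: N_def matrix_transpose_mul)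
    also have "\<dots> = N" by (subst xN) (simp add: matrix_mul_assoc I)
    finally show ?thesis .
  qed
  then have "transpose (N - mat 1) = N - mat 1"
    by (simp add: vec_eq_iff transpose_def mat_def)
  moreover have "x - x' = x' ** (N - mat 1)"
    using xN by (simp add: bounded_bilinear.diff_right[OF bounded_bilinear_matrix_mult])
  ultimately show thesis by (rule that)
qed

lemma grad_eqI:
  assumes "(F has_derivative (\<lambda>h. g \<bullet> h)) (at y)"
  shows "grad F y = g"
  unfolding grad_def
proof (rule the_equality[where P = "\<lambda>g. (F has_derivative (\<lambda>h. g \<bullet> h)) (at y)", OF assms])
  fix g' assume "(F has_derivative (\<lambda>h. g' \<bullet> h)) (at y)"
  from has_derivative_unique[OF assms this] have "g \<bullet> (g - g') = g' \<bullet> (g - g')"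
    by meson
  then have "(g - g') \<bullet> (g - g') = 0" by (simp add: inner_diff_left)
  then show "g' = g" by simp
qed

lemma inner_symmetric_transpose_mult_sum:
  fixes y h :: "real^'r^'d"
  assumes "transpose S = S"
  shows "S \<bullet> (transpose y ** h + transpose h ** y) = 2 * ((y ** S) \<bullet> h)"
proof -
  have "S \<bullet> (transpose h ** y) = transpose S \<bullet> transpose (transpose h ** y)"
    by (simp add: inner_transpose)
  also have "\<dots> = S \<bullet> (transpose y ** h)"
    by (simp add: assms matrix_transpose_mul)
  moreover have "S \<bullet> (transpose y ** h) = (y ** S) \<bullet> h"
    by (simp add: inner_matrix_mult_left)
  ultimately show ?thesis
    by (simp add: inner_add_right)
qed

lemma grad_merit_Stiefel:
  fixes f :: "real^'r^'d \<Rightarrow> real"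
  assumes f_deriv: "\<And>y. (f has_derivative (\<lambda>h. G y \<bullet> h)) (at y)"
    and G_deriv: "(G has_derivative G') (at x')"
    and "x' \<in> Stiefel"
  shows "grad (merit f \<gamma>) x' = G x' - x' ** msym (transpose x' ** G x')"
proof -
  define R where "R y = transpose y ** y - mat 1" for y :: "real^'r^'d"
  define A where "A y = msym (transpose y ** G y)" for y :: "real^'r^'d"
  define R' where "R' h = transpose x' ** h + transpose h ** x'" for h :: "real^'r^'d"
  define A' where "A' h = msym (transpose x' ** G' h + transpose h ** G x')" for h :: "real^'r^'d"
  have merit_eq: "merit f \<gamma> = (\<lambda>y. f y - (1/2) * (A y \<bullet> R y) + (\<gamma>/4) * (R y \<bullet> R y))"
    using grad_eqI[OF f_deriv]
    by (simp add: fun_eq_iff merit_def A_def R_def power2_norm_eq_inner)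
  have transpose_deriv: "(transpose has_derivative transpose) (at y)" for y :: "real^'r^'d"
    by (rule bounded_linear_imp_has_derivative[OF bounded_linear_transpose])
  have "(R has_derivative R') (at x')"
    unfolding R_def[abs_def] R'_def[abs_def]
    by (rule has_derivative_diff[OF bounded_bilinear.FDERIV[OF bounded_bilinear_matrix_mult
          transpose_deriv has_derivative_ident] has_derivative_const, simplified])
  moreover have "(A has_derivative A') (at x')"
    unfolding A_def[abs_def] A'_def[abs_def]
    by (intro bounded_linear.has_derivative[OF bounded_linear_msym]
        bounded_bilinear.FDERIV[OF bounded_bilinear_matrix_mult transpose_deriv G_deriv])
  ultimately have "(merit f \<gamma> has_derivative
      (\<lambda>h. G x' \<bullet> h - (1/2) * (A x' \<bullet> R' h + A' h \<bullet> R x') + (\<gamma>/4) * (R x' \<bullet> R' h + R' h \<bullet> R x')))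
      (at x')"
    unfolding merit_eq
    by (intro has_derivative_add has_derivative_diff has_derivative_mult_right
        has_derivative_inner f_deriv)
  \<comment> \<open>the residual R vanishes at x', which removes the \<gamma>-term and the derivative of A\<close>
  moreover have "R x' = 0" using \<open>x' \<in> Stiefel\<close> by (simp add: R_def Stiefel_def)
  ultimately have "(merit f \<gamma> has_derivative
      (\<lambda>h. (G x' - x' ** msym (transpose x' ** G x')) \<bullet> h)) (at x')"
    by (simp add: R'_def A_def inner_symmetric_transpose_mult_sum inner_diff_left)
  then show ?thesis by (rule grad_eqI)
qed

lemma inner_Stiefel_tangent_normal:
  fixes x' G :: "real^'r^'d"
  assumes "x' \<in> Stiefel" "transpose P = P"
  shows "(G - x' ** msym (transpose x' ** G)) \<bullet> (x' ** P) = 0"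
proof -
  have "G \<bullet> (x' ** P) = (transpose x' ** G) \<bullet> P"
    by (metis inner_commute inner_matrix_mult_left)
  moreover have "(x' ** msym (transpose x' ** G)) \<bullet> (x' ** P) = (transpose x' ** G) \<bullet> P"
    using assms
    by (simp add: inner_matrix_mult_left matrix_mul_assoc Stiefel_def inner_msym_symmetric)
  ultimately show ?thesis by (simp add: inner_diff_left)
qed

theorem lemma9:
  fixes f :: "real^'r^'d \<Rightarrow> real" and \<gamma> \<epsilon> :: real and x x' :: "real^'r^'d"
  assumes "C2 f" and "\<gamma> > 0" and "0 < \<epsilon>" and "\<epsilon> < 3/4"
    and "x \<in> Stiefel_eps \<epsilon>"
    and "x' \<in> Stiefel" and "\<forall>z\<in>Stiefel. norm (x - x') \<le> norm (x - z)"
  shows "grad (merit f \<gamma>) x' \<bullet> (x - x') = 0"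
proof -
  obtain G H where "\<And>y. (f has_derivative (\<lambda>h. G y \<bullet> h)) (at y)"
    and "(G has_derivative blinfun_apply (H x')) (at x')"
    using \<open>C2 f\<close> unfolding C2_def by blast
  then have "grad (merit f \<gamma>) x' = G x' - x' ** msym (transpose x' ** G x')"
    using \<open>x' \<in> Stiefel\<close> by (rule grad_merit_Stiefel)
  moreover obtain P where "transpose P = P" "x - x' = x' ** P"
    using nearest_Stiefel_normal[OF \<open>x' \<in> Stiefel\<close> assms(7)] .
  ultimately show ?thesis
    using inner_Stiefel_tangent_normal[OF \<open>x' \<in> Stiefel\<close>] by simp
qed

end
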